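(* Let $\Omega$ be an angular domain of opening $\pi/\alpha$, and let $f$ be a slice regular function on $\Omega$, continuous on $\overline{\Omega}$, of order $\rho<\alpha$. If there exists $M\ge0$ such that $|f|\le M$ on $\partial\Omega$, then $|f|\le M$ on $\Omega$.
   Context: $\mathbb{H}$ denotes the quaternions with Euclidean norm $|q|$; $\mathbb{S}=\{ix_1+jx_2+kx_3: x_1^2+x_2^2+x_3^2=1\}$; for $I\in\mathbb{S}$, $L_I=\mathbb{R}+\mathbb{R}I$, $e^{I\vartheta}=\cos\vartheta+I\sin\vartheta$, and $\Omega_I=\Omega\cap L_I$. A function $f:\Omega\to\mathbb{H}$ on an open set $\Omega$ is slice regular if for every $I\in\mathbb{S}$ its restriction $f_I$ to $\Omega_I$ satisfies $\frac12\left(\frac{\partial}{\partial x}+I\frac{\partial}{\partial y}\right)f_I(x+yI)=0$. A domain $\Omega$ is a slice domain if $\Omega\cap\mathbb{R}\ne\emptyset$ and each $\Omega_I$ is a domain in $L_I$. A slice domain $\Omega$ is an angular domain if for every $I\in\mathbb{S}$, $\Omega_I=\{re^{I(\zeta_I+\vartheta)}: r>0,\ |\vartheta|<\varphi_I/2\}$ for some $\zeta_I\in\mathbb{R}$, $0<\varphi_I<2\pi$; its opening is $\sup_{I\in\mathbb{S}}\varphi_I$. For $f$ slice regular on $\Omega$ and continuous up to the boundary, $M_f(r,\Omega)=\max\{|f(q)|: q\in\overline\Omega,\ |q|=r\}$ and the order of $f$ is $\rho=\limsup_{r\to+\infty}\frac{\ln^+\ln^+M_f(r,\Omega)}{\ln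 r}$, where $\ln^+x=\max\{\ln x,0\}$. *)

theory Defs
  imports "HOL-Analysis.Analysis"
begin

text \<open>Quaternions are modelled as real^4: component 1 is the real part,
components 2,3,4 the i, j, k parts. The norm is the Euclidean norm.\<close>

type_synonym quat = "real^4"

definition qmult :: "quat \<Rightarrow> quat \<Rightarrow> quat" where
  "qmult p q = vector
     [p$1*q$1 - p$2*q$2 - p$3*q$3 - p$4*q$4,
      p$1*q$2 + p$2*q$1 + p$3*q$4 - p$4*q$3,
      p$1*q$3 - p$2*q$4 + p$3*q$1 + p$4*q$2,
      p$1*q$4 + p$2*q$3 - p$3*q$2 + p$4*q$1]"

definition qreal :: "real \<Rightarrow> quat" where
  "qreal r = vector [r, 0, 0, 0]"

definition imag_units :: "quat set" where
  "imag_units = {q. q$1 = 0 \<and> (q$2)^2 + (q$3)^2 + (q$4)^2 = 1}"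

definition slice_plane :: "quat \<Rightarrow> quat set" where
  "slice_plane I = {qreal x + y *\<^sub>R I | x y. True}"

definition qexp_I :: "quat \<Rightarrow> real \<Rightarrow> quat" where
  "qexp_I I \<theta> = qreal (cos \<theta>) + sin \<theta> *\<^sub>R I"

definition slice_regular :: "(quat \<Rightarrow> quat) \<Rightarrow> quat set \<Rightarrow> bool" where
  "slice_regular f \<Omega> \<longleftrightarrow> open \<Omega> \<and>
     (\<forall>I\<in>imag_units. \<forall>x y. qreal x + y *\<^sub>R I \<in> \<Omega> \<longrightarrow>
        (\<exists>D. ((\<lambda>(s,t). f (qreal s + t *\<^sub>R I)) has_derivative D) (at (x, y))
             \<and> D (1, 0) + qmult I (D (0, 1)) = 0))"

definition slice_domain :: "quat set \<Rightarrow> bool" where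
  "slice_domain \<Omega> \<longleftrightarrow> open \<Omega> \<and> connected \<Omega> \<and> \<Omega> \<inter> range qreal \<noteq> {} \<and>
     (\<forall>I\<in>imag_units. openin (top_of_set (slice_plane I)) (\<Omega> \<inter> slice_plane I)
                      \<and> connected (\<Omega> \<inter> slice_plane I))"

definition sector :: "quat \<Rightarrow> real \<Rightarrow> real \<Rightarrow> quat set" where
  "sector I \<zeta> \<phi> = {r *\<^sub>R qexp_I I (\<zeta> + \<theta>) | r \<theta>. r > 0 \<and> \<bar>\<theta>\<bar> < \<phi> / 2}"

definition angular_domain :: "quat set \<Rightarrow> bool" where
  "angular_domain \<Omega> \<longleftrightarrow> slice_domain \<Omega> \<and>
     (\<forall>I\<in>imag_units. \<exists>\<zeta> \<phi>. 0 < \<phi> \<and> \<phi> < 2 * pi \<and> \<Omega> \<inter> slice_plane I = sector I \<zeta> \<phi>)"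

definition angle_opening :: "quat set \<Rightarrow> real" where
  "angle_opening \<Omega> = Sup {\<phi>. \<exists>I\<in>imag_units. \<exists>\<zeta>. 0 < \<phi> \<and> \<phi> < 2 * pi \<and>
                          \<Omega> \<inter> slice_plane I = sector I \<zeta> \<phi>}"

definition max_modulus :: "(quat \<Rightarrow> quat) \<Rightarrow> quat set \<Rightarrow> real \<Rightarrow> real" where
  "max_modulus f \<Omega> r = Sup ((\<lambda>q. norm (f q)) ` (closure \<Omega> \<inter> {q. norm q = r}))"

text \<open>ln^+ x = max (ln x) 0, with ln^+ x = 0 for x <= 1 (covering x = 0).\<close>
definition lnp :: "real \<Rightarrow> real" where
  "lnp x = (if x \<le> 1 then 0 else ln x)"

definition order_of :: "(quat \<Rightarrow> quat) \<Rightarrow> quat set \<Rightarrow> ereal" where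
  "order_of f \<Omega> = Limsup at_top (\<lambda>r::real. ereal (lnp (lnp (max_modulus f \<Omega> r)) / ln r))"

end

theory Submission
  imports Defs "HOL-Complex_Analysis.Conformal_Mappings" "HOL-Real_Asymp.Real_Asymp"
begin

(* Fix q in \<Omega> with f q \<noteq> 0 and a slice L_I through q; there \<Omega> is a sector of angle
   \<phi> \<le> pi/\<alpha>. Identifying L_I with the complex plane and projecting f onto the orthonormal pair
   (u, Iu), u = f q / |f q|, yields a holomorphic function \<Phi> on a planar sector which is bounded
   by M on the boundary, grows at most like exp(|w|^\<rho>) for some \<rho> < \<alpha>, and satisfies
   \<Phi>(q) = |f q|. The classical Phragmen-Lindelof argument (maximum modulus principle for
   \<Phi>(w) exp(-\<epsilon> w^\<beta>) with \<rho> < \<beta> < \<alpha>, then \<epsilon> \<rightarrow> 0) gives |f q| \<le> M. *)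

(* The open sector of opening \<phi> symmetric about the positive real axis, and its closed
  counterpart; every slice of an angular domain is a rotated copy of such a sector. *)
definition csector :: "real \<Rightarrow> complex set" where
  "csector \<phi> = {rcis r \<theta> | r \<theta>. r > 0 \<and> \<bar>\<theta>\<bar> < \<phi> / 2}"

definition closed_csector :: "real \<Rightarrow> complex set" where
  "closed_csector \<phi> = {rcis r \<theta> | r \<theta>. r \<ge> 0 \<and> \<bar>\<theta>\<bar> \<le> \<phi> / 2}"

lemma rcis_notin_nonpos_Reals:
  assumes "r > 0" "\<bar>\<theta>\<bar> < pi"
  shows "rcis r \<theta> \<notin> \<real>\<^sub>\<le>\<^sub>0"
proof
  assume neg: "rcis r \<theta> \<in> \<real>\<^sub>\<le>\<^sub>0"
  have nz: "rcis r \<theta> \<noteq> 0" using assms by (simp add: rcis_def)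
  have "Ln (rcis r \<theta>) = Complex (ln r) \<theta>"
    using Ln_rcis[of r \<theta>] assms by (simp add: abs_less_iff)
  moreover have "Im (Ln (rcis r \<theta>)) = pi"
    using Im_Ln_eq_pi[OF nz] neg nz by (auto simp: complex_nonpos_Reals_iff complex_eq_iff)
  ultimately show False using assms by simp
qed

lemma csector_Ln:
  assumes "0 < \<phi>" "\<phi> \<le> 2 * pi"
  shows "csector \<phi> = {z. z \<notin> \<real>\<^sub>\<le>\<^sub>0 \<and> \<bar>Im (Ln z)\<bar> < \<phi> / 2}"
proof safe
  fix z assume "z \<in> csector \<phi>"
  then obtain r \<theta> where z: "z = rcis r \<theta>" "r > 0" "\<bar>\<theta>\<bar> < \<phi> / 2" by (auto simp: csector_def)
  then have t: "\<bar>\<theta>\<bar> < pi" using assms by linarith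
  show "z \<in> \<real>\<^sub>\<le>\<^sub>0 \<Longrightarrow> False" using rcis_notin_nonpos_Reals[OF z(2) t] z(1) by simp
  have "Ln (rcis r \<theta>) = Complex (ln r) \<theta>" using Ln_rcis[of r \<theta>] z t by (simp add: abs_less_iff)
  then show "\<bar>Im (Ln z)\<bar> < \<phi> / 2" using z by simp
next
  fix z assume z: "z \<notin> \<real>\<^sub>\<le>\<^sub>0" "\<bar>Im (Ln z)\<bar> < \<phi> / 2"
  have nz: "z \<noteq> 0" using z by auto
  have "z = rcis (cmod z) (Arg z)" by (simp add: rcis_cmod_Arg)
  moreover have "Arg z = Im (Ln z)" using nz by (rule Arg_eq_Im_Ln)
  ultimately show "z \<in> csector \<phi>" using z nz unfolding csector_def by force
qed

lemma open_csector:
  assumes "0 < \<phi>" "\<phi> \<le> 2 * pi"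
  shows "open (csector \<phi>)"
proof -
  have "continuous_on (- \<real>\<^sub>\<le>\<^sub>0) (\<lambda>z. Im (Ln z))" by (intro continuous_intros) auto
  then have "open ((- \<real>\<^sub>\<le>\<^sub>0) \<inter> (\<lambda>z. Im (Ln z)) -` {-\<phi>/2<..<\<phi>/2})"
    by (rule continuous_open_preimage) (simp_all add: open_Compl)
  moreover have "(- \<real>\<^sub>\<le>\<^sub>0) \<inter> (\<lambda>z. Im (Ln z)) -` {-\<phi>/2<..<\<phi>/2} = csector \<phi>"
    unfolding csector_Ln[OF assms] by (auto simp: abs_less_iff)
  ultimately show ?thesis by simp
qed

(* Closure points keep polar coordinates within the closed angle, as polar coordinates
  range over a compact set near any point. *)
lemma closure_csector_subset: "closure (csector \<phi>) \<subseteq> closed_csector \<phi>"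
proof
  fix z assume z: "z \<in> closure (csector \<phi>)"
  define P where "P x = rcis (fst x) (snd x)" for x :: "real \<times> real"
  define K where "K = cbox (0::real, - \<phi> / 2) (norm z + 1, \<phi> / 2)"
  have "continuous_on K P" unfolding P_def rcis_def cis_conv_exp by (intro continuous_intros)
  then have closed_PK: "closed (P ` K)"
    by (intro compact_imp_closed compact_continuous_image) (simp_all add: K_def)
  have "z \<in> closure (csector \<phi> \<inter> ball z 1)"
    using open_Int_closure_subset[of "ball z 1" "csector \<phi>"] z by (auto simp: Int_commute)
  moreover have "csector \<phi> \<inter> ball z 1 \<subseteq> P ` K"
  proof
    fix w assume w: "w \<in> csector \<phi> \<inter> ball z 1"
    then obtain r \<theta> where wr: "w = rcis r \<theta>" "r > 0" "\<bar>\<theta>\<bar> < \<phi> / 2" by (auto simp: csector_def)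
    have "norm w < norm z + 1" using w norm_triangle_sub[of w z] by (auto simp: dist_norm norm_minus_commute)
    then have "(r, \<theta>) \<in> K" using wr by (auto simp: K_def abs_less_iff)
    then show "w \<in> P ` K" using wr by (force simp: P_def)
  qed
  ultimately have "z \<in> P ` K" using closed_PK closure_minimal by blast
  then show "z \<in> closed_csector \<phi>" by (force simp: P_def K_def abs_le_iff closed_csector_def)
qed

lemma closed_csector_polar:
  assumes "z \<in> closed_csector \<phi>" "z \<noteq> 0"
  obtains r \<theta> where "r > 0" "\<bar>\<theta>\<bar> \<le> \<phi> / 2" "z = rcis r \<theta>"
proof -
  obtain r \<theta> where r: "z = rcis r \<theta>" "r \<ge> 0" "\<bar>\<theta>\<bar> \<le> \<phi> / 2"
    using assms(1) unfolding closed_csector_def by blast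
  then have "r > 0" using assms(2) by (cases "r = 0") auto
  then show ?thesis using r that by blast
qed

lemma closed_csector_notin_nonpos_Reals:
  assumes "z \<in> closed_csector \<phi>" "\<phi> < 2 * pi" "z \<noteq> 0"
  shows "z \<notin> \<real>\<^sub>\<le>\<^sub>0"
proof -
  obtain r \<theta> where "r > 0" "\<bar>\<theta>\<bar> \<le> \<phi> / 2" "z = rcis r \<theta>" using closed_csector_polar assms by blast
  moreover have "\<bar>\<theta>\<bar> < pi" using calculation assms(2) by linarith
  ultimately show ?thesis using rcis_notin_nonpos_Reals by blast
qed

(* Key estimate for the damping factor: on the closed sector, z powr \<beta> has real part at
  least cos(\<beta>\<phi>/2)|z|^\<beta>, which is a positive multiple of |z|^\<beta> when \<beta>\<phi> < pi. *)
lemma Re_powr_closed_csector: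
  assumes z: "z \<in> closed_csector \<phi>" and \<phi>: "\<phi> < 2 * pi" and \<beta>: "0 < \<beta>" "\<beta> * \<phi> < pi"
  shows "cos (\<beta> * \<phi> / 2) * norm z powr \<beta> \<le> Re (z powr of_real \<beta>)"
proof (cases "z = 0")
  case False
  then obtain r \<theta> where r: "r > 0" "\<bar>\<theta>\<bar> \<le> \<phi> / 2" "z = rcis r \<theta>"
    using closed_csector_polar[OF z] by blast
  have "\<bar>\<theta>\<bar> < pi" using r \<phi> by linarith
  then have "Ln z = Complex (ln r) \<theta>" using Ln_rcis[of r \<theta>] r by (simp add: abs_less_iff)
  then have "Re (z powr of_real \<beta>) = norm z powr \<beta> * cos (\<beta> * \<theta>)"
    using False r by (simp add: powr_def Re_exp powr_def[where 'a=real] mult.commute)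
  moreover have "\<beta> * \<phi> / 2 \<le> pi" using \<beta> pi_gt_zero by linarith
  then have "cos (\<beta> * \<phi> / 2) \<le> cos \<bar>\<beta> * \<theta>\<bar>"
    using r \<beta> by (intro cos_monotone_0_pi_le) (auto simp: abs_mult mult_left_mono)
  ultimately show ?thesis
    by (metis cos_abs_real mult.commute mult_right_mono powr_ge_zero)
qed simp

lemma continuous_on_powr_closed_csector:
  assumes "\<phi> < 2 * pi" "0 < \<beta>"
  shows "continuous_on (closed_csector \<phi>) (\<lambda>z. z powr of_real \<beta>)"
proof (intro continuous_on_powr_complex continuous_intros)
  show "closed_csector \<phi> \<subseteq> {z. 0 \<le> Re z \<or> Im z \<noteq> 0}"
    using closed_csector_notin_nonpos_Reals[OF _ assms(1)]
    by (force simp: complex_nonpos_Reals_iff)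
qed (use assms in auto)

lemma norm_exp_powr_closed_csector:
  assumes w: "w \<in> closed_csector \<phi>" and \<phi>: "\<phi> < 2 * pi" and \<beta>: "0 < \<beta>" "\<beta> * \<phi> < pi"
    and \<epsilon>: "0 \<le> \<epsilon>"
  shows "norm (exp (- of_real \<epsilon> * w powr of_real \<beta>)) \<le> exp (- \<epsilon> * cos (\<beta> * \<phi> / 2) * norm w powr \<beta>)"
proof -
  have "\<epsilon> * (cos (\<beta> * \<phi> / 2) * norm w powr \<beta>) \<le> \<epsilon> * Re (w powr of_real \<beta>)"
    using Re_powr_closed_csector[OF w \<phi> \<beta>] \<epsilon> by (rule mult_left_mono)
  then show ?thesis by simp
qed

lemma exp_powr_diff_eventually_small:
  fixes c \<delta> \<rho> \<beta> :: real
  assumes "0 < c" "0 < \<delta>" "\<rho> < \<beta>" "0 < \<beta>"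
  shows "eventually (\<lambda>R. exp (R powr \<rho> - c * R powr \<beta>) < \<delta>) at_top"
proof -
  have "((\<lambda>R. exp (R powr \<rho> - c * R powr \<beta>)) \<longlongrightarrow> 0) at_top"
    using assms by real_asymp
  then show ?thesis using assms(2) by (rule order_tendstoD(2))
qed

(* Maximum modulus principle on the truncated sector csector \<phi> \<inter> ball 0 R: its boundary consists
  of boundary points of the sector and points of modulus R. *)
lemma maximum_modulus_truncated_csector:
  assumes \<phi>: "0 < \<phi>" "\<phi> < 2 * pi"
    and hol: "h holomorphic_on csector \<phi>" and cont: "continuous_on (closure (csector \<phi>)) h"
    and sides: "\<And>w. w \<in> frontier (csector \<phi>) \<Longrightarrow> norm (h w) \<le> B"
    and arc: "\<And>w. w \<in> closure (csector \<phi>) \<Longrightarrow> norm w = R \<Longrightarrow> norm (h w) \<le> B"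
    and z: "z \<in> csector \<phi>" "norm z < R"
  shows "norm (h z) \<le> B"
proof -
  define D where "D = csector \<phi> \<inter> ball 0 R"
  have open_S: "open (csector \<phi>)" using open_csector \<phi> by simp
  have "R > 0" using norm_ge_zero[of z] z(2) by linarith
  then have clD: "closure D \<subseteq> closure (csector \<phi>) \<inter> cball 0 R"
    using closure_mono[of D "csector \<phi>"] closure_mono[of D "ball 0 R"] by (auto simp: D_def)
  have frontier_D: "norm (h w) \<le> B" if w: "w \<in> frontier D" for w
  proof -
    have wD: "w \<in> closure D" "w \<notin> D" using w open_S by (auto simp: D_def frontier_def interior_open)
    then have wS: "w \<in> closure (csector \<phi>)" and wR: "norm w \<le> R" using clD by auto
    show ?thesis
    proof (cases "w \<in> csector \<phi>")
      case True
      then show ?thesis using wD wR arc[OF wS] by (auto simp: D_def)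
    next
      case False
      then show ?thesis using wS open_S sides by (simp add: frontier_def interior_open)
    qed
  qed
  have hol_D: "h holomorphic_on interior D"
    using open_S by (auto simp: D_def interior_open intro: holomorphic_on_subset[OF hol])
  have cont_D: "continuous_on (closure D) h" using clD by (auto intro: continuous_on_subset[OF cont])
  have bounded_D: "bounded D" and z_D: "z \<in> D" using z by (auto simp: D_def)
  show ?thesis by (rule maximum_modulus_frontier[OF hol_D cont_D bounded_D frontier_D z_D])
qed

(* Phragmen-Lindelof estimate for the damped function \<Phi> w exp(-\<epsilon> w powr \<beta>): on the straight
  sides the damping factor has modulus at most 1, and on the arc |w| = R the damping beats the
  growth of \<Phi> once R is large. *)
lemma phragmen_lindelof_damped:
  fixes \<Phi> :: "complex \<Rightarrow> complex"
  assumes \<phi>: "0 < \<phi>" "\<phi> < 2 * pi" and \<beta>: "0 < \<beta>" "\<beta> * \<phi> < pi" "\<rho> < \<beta>"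
    and cont: "continuous_on (closure (csector \<phi>)) \<Phi>"
    and hol: "\<Phi> holomorphic_on csector \<phi>"
    and bd: "\<And>w. w \<in> frontier (csector \<phi>) \<Longrightarrow> norm (\<Phi> w) \<le> M"
    and gr: "\<And>w. w \<in> closure (csector \<phi>) \<Longrightarrow> R0 \<le> norm w \<Longrightarrow> norm (\<Phi> w) \<le> exp (norm w powr \<rho>)"
    and M: "0 \<le> M" and \<epsilon>: "0 < \<epsilon>" and \<delta>: "0 < \<delta>" and z: "z \<in> csector \<phi>"
  shows "norm (\<Phi> z * exp (- of_real \<epsilon> * z powr of_real \<beta>)) \<le> M + \<delta>"
proof -
  define \<kappa> where "\<kappa> = cos (\<beta> * \<phi> / 2)"
  have "0 < \<beta> * \<phi>" using \<beta> \<phi> by simp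
  then have \<kappa>: "\<kappa> > 0" unfolding \<kappa>_def using \<beta> pi_gt_zero by (intro cos_gt_zero_pi) linarith+
  define h where "h w = \<Phi> w * exp (- of_real \<epsilon> * w powr of_real \<beta>)" for w
  have h_small: "norm (h w) \<le> norm (\<Phi> w) * exp (- \<epsilon> * \<kappa> * norm w powr \<beta>)"
    if "w \<in> closure (csector \<phi>)" for w
  proof -
    have "w \<in> closed_csector \<phi>" using that closure_csector_subset by blast
    then have "norm (exp (- of_real \<epsilon> * w powr of_real \<beta>)) \<le> exp (- \<epsilon> * \<kappa> * norm w powr \<beta>)"
      unfolding \<kappa>_def using \<phi> \<beta> \<epsilon> by (intro norm_exp_powr_closed_csector) auto
    then show ?thesis unfolding h_def norm_mult by (rule mult_left_mono) simp
  qed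
  have large_R: "eventually (\<lambda>R. max (norm z) R0 < R \<and> exp (R powr \<rho> - \<epsilon> * \<kappa> * R powr \<beta>) < \<delta>) at_top"
    using \<epsilon> \<kappa> \<delta> \<beta> by (intro eventually_conj eventually_gt_at_top exp_powr_diff_eventually_small) auto
  have "\<exists>R. max (norm z) R0 < R \<and> exp (R powr \<rho> - \<epsilon> * \<kappa> * R powr \<beta>) < \<delta>"
    using eventually_happens'[OF _ large_R] by simp
  then obtain R where R: "max (norm z) R0 < R" "exp (R powr \<rho> - \<epsilon> * \<kappa> * R powr \<beta>) < \<delta>"
    by blast
  show ?thesis
  proof (fold h_def, rule maximum_modulus_truncated_csector[OF \<phi> _ _ _ _ z])
    show "h holomorphic_on csector \<phi>"
      unfolding h_def using csector_Ln \<phi> by (intro holomorphic_on_mult[OF hol] holomorphic_intros) auto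
    show "continuous_on (closure (csector \<phi>)) h"
      unfolding h_def using closure_csector_subset \<phi> \<beta>
      by (intro continuous_on_mult[OF cont] continuous_intros
          continuous_on_subset[OF continuous_on_powr_closed_csector]) auto
    show "norm (h w) \<le> M + \<delta>" if "w \<in> frontier (csector \<phi>)" for w
    proof -
      have "w \<in> closure (csector \<phi>)" using that by (simp add: frontier_def)
      then have "norm (h w) \<le> norm (\<Phi> w) * exp (- \<epsilon> * \<kappa> * norm w powr \<beta>)" by (rule h_small)
      also have "\<dots> \<le> M * 1" using bd[OF that] \<epsilon> \<kappa> M by (intro mult_mono) simp_all
      finally show ?thesis using \<delta> by simp
    qed
    show "norm (h w) \<le> M + \<delta>" if w: "w \<in> closure (csector \<phi>)" "norm w = R" for w
    proof -
      have "norm (h w) \<le> norm (\<Phi> w) * exp (- \<epsilon> * \<kappa> * R powr \<beta>)"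
        using h_small[OF w(1)] w(2) by simp
      also have "\<dots> \<le> exp (R powr \<rho>) * exp (- \<epsilon> * \<kappa> * R powr \<beta>)"
        using gr[OF w(1)] w(2) R(1) by (intro mult_right_mono) simp_all
      also have "\<dots> < \<delta>" using R(2) by (simp add: exp_add[symmetric])
      finally show ?thesis using M by simp
    qed
    show "norm z < R" using R(1) by simp
  qed
qed

(* Phragmen-Lindelof principle for a planar sector: let \<epsilon> tend to 0 in the damped bound. *)
lemma phragmen_lindelof_sector:
  fixes \<Phi> :: "complex \<Rightarrow> complex"
  assumes \<phi>: "0 < \<phi>" "\<phi> < 2 * pi" and \<beta>: "0 < \<beta>" "\<beta> * \<phi> < pi" "\<rho> < \<beta>"
    and cont: "continuous_on (closure (csector \<phi>)) \<Phi>"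
    and hol: "\<Phi> holomorphic_on csector \<phi>"
    and bd: "\<And>w. w \<in> frontier (csector \<phi>) \<Longrightarrow> norm (\<Phi> w) \<le> M"
    and gr: "\<And>w. w \<in> closure (csector \<phi>) \<Longrightarrow> R0 \<le> norm w \<Longrightarrow> norm (\<Phi> w) \<le> exp (norm w powr \<rho>)"
    and M: "0 \<le> M" and z: "z \<in> csector \<phi>"
  shows "norm (\<Phi> z) \<le> M"
proof -
  define a where "a = Re (z powr of_real \<beta>)"
  have bound: "norm (\<Phi> z) \<le> (M + t) * exp (t * a)" if t: "t > 0" for t
  proof -
    have "norm (\<Phi> z) * exp (- t * a) \<le> M + t"
      using phragmen_lindelof_damped[OF assms(1-10) t t z] by (simp add: norm_mult a_def)
    then show ?thesis by (simp add: exp_minus field_simps)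
  qed
  have "((\<lambda>t. (M + t) * exp (t * a)) \<longlongrightarrow> (M + 0) * exp (0 * a)) (at_right 0)"
    by (intro tendsto_intros)
  moreover have "eventually (\<lambda>t. norm (\<Phi> z) \<le> (M + t) * exp (t * a)) (at_right 0)"
    using eventually_at_right_less[of 0] by (rule eventually_mono) (use bound in simp)
  ultimately show ?thesis
    by (intro tendsto_lowerbound[where F = "at_right (0::real)"]) simp_all
qed

lemma vec4_comp:
  "(vector [a, b, c, d] :: real^4) $ 1 = a" "(vector [a, b, c, d] :: real^4) $ 2 = b"
  "(vector [a, b, c, d] :: real^4) $ 3 = c" "(vector [a, b, c, d] :: real^4) $ 4 = d"
  by (simp_all add: vector_def)

lemma qreal_comp [simp]: "qreal x $ 1 = x" "qreal x $ 2 = 0" "qreal x $ 3 = 0" "qreal x $ 4 = 0"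
  by (simp_all add: qreal_def vec4_comp)

lemma qmult_comp:
  "qmult p q $ 1 = p$1*q$1 - p$2*q$2 - p$3*q$3 - p$4*q$4"
  "qmult p q $ 2 = p$1*q$2 + p$2*q$1 + p$3*q$4 - p$4*q$3"
  "qmult p q $ 3 = p$1*q$3 - p$2*q$4 + p$3*q$1 + p$4*q$2"
  "qmult p q $ 4 = p$1*q$4 + p$2*q$3 - p$3*q$2 + p$4*q$1"
  by (simp_all add: qmult_def vec4_comp)

lemma inner_quat: "inner (x::quat) y = x$1*y$1 + x$2*y$2 + x$3*y$3 + x$4*y$4"
  by (simp add: inner_vec_def sum_4)

lemma quat_eq_iff: "(x::quat) = y \<longleftrightarrow> x$1 = y$1 \<and> x$2 = y$2 \<and> x$3 = y$3 \<and> x$4 = y$4"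
  by (simp add: vec_eq_iff forall_4)

lemma imag_unitsD:
  assumes "I \<in> imag_units" shows "I$1 = 0" "(I$2)^2 + (I$3)^2 + (I$4)^2 = 1"
  using assms by (auto simp: imag_units_def)

lemma norm_slice_point:
  assumes "I \<in> imag_units"
  shows "norm (qreal x + y *\<^sub>R I) = cmod (Complex x y)"
proof -
  have "(norm (qreal x + y *\<^sub>R I))^2 = x^2 + y^2 * ((I$2)^2 + (I$3)^2 + (I$4)^2)"
    unfolding power2_norm_eq_inner inner_quat using imag_unitsD[OF assms] by simp algebra
  also have "\<dots> = (cmod (Complex x y))^2" using imag_unitsD[OF assms] by (simp add: cmod_power2)
  finally show ?thesis by simp
qed

lemma inner_qmult_imag_skew:
  assumes "I \<in> imag_units"
  shows "inner (qmult I w) v = - inner w (qmult I v)"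
  using imag_unitsD(1)[OF assms] unfolding inner_quat qmult_comp by (simp add: algebra_simps)

lemma inner_qmult_imag_isometry:
  assumes "I \<in> imag_units"
  shows "inner (qmult I w) (qmult I v) = inner w v"
  using imag_unitsD[OF assms] unfolding inner_quat qmult_comp by algebra

lemma orthonormal_imag_pair:
  assumes "I \<in> imag_units" "norm u = 1"
  shows "norm (qmult I u) = 1" "inner u (qmult I u) = 0"
proof -
  show "norm (qmult I u) = 1"
    using inner_qmult_imag_isometry[OF assms(1), of u u] assms(2) by (simp add: norm_eq_sqrt_inner)
  have "inner (qmult I u) u = - inner u (qmult I u)" by (rule inner_qmult_imag_skew[OF assms(1)])
  then show "inner u (qmult I u) = 0" by (simp add: inner_commute)
qed

lemma bessel_inequality_two:
  fixes u v w :: "'a::real_inner"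
  assumes "norm u = 1" "norm v = 1" "inner u v = 0"
  shows "(inner w u)^2 + (inner w v)^2 \<le> (norm w)^2"
proof -
  define a where "a = inner w u"
  define b where "b = inner w v"
  have uu: "inner u u = 1" and vv: "inner v v = 1" using assms by (simp_all add: norm_eq_1)
  have "0 \<le> inner (w - a *\<^sub>R u - b *\<^sub>R v) (w - a *\<^sub>R u - b *\<^sub>R v)" by simp
  also have "\<dots> = inner w w - a^2 - b^2"
    using assms(3) uu vv
    by (simp add: inner_commute a_def b_def power2_eq_square algebra_simps)
  finally show ?thesis by (simp add: a_def b_def power2_norm_eq_inner)
qed

(* slice_embed I \<zeta> identifies the complex plane with L_I, rotated by the angle \<zeta>;
  slice_coord I u w gives the coordinates of w in the orthonormal pair (u, Iu), read as a complex number.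
  Composing f with both turns the restriction f_I into a complex function. *)
definition slice_embed :: "quat \<Rightarrow> real \<Rightarrow> complex \<Rightarrow> quat" where
  "slice_embed I \<zeta> z = qreal (Re (cis \<zeta> * z)) + Im (cis \<zeta> * z) *\<^sub>R I"

definition slice_coord :: "quat \<Rightarrow> quat \<Rightarrow> quat \<Rightarrow> complex" where
  "slice_coord I u w = Complex (inner w u) (inner w (qmult I u))"

lemma bounded_linear_slice_embed: "bounded_linear (slice_embed I \<zeta>)"
proof -
  have "slice_embed I \<zeta> = (\<lambda>z. Re (cis \<zeta> * z) *\<^sub>R qreal 1 + Im (cis \<zeta> * z) *\<^sub>R I)"
    by (auto simp: slice_embed_def quat_eq_iff)
  moreover have "bounded_linear (\<lambda>z. Re (cis \<zeta> * z))" "bounded_linear (\<lambda>z. Im (cis \<zeta> * z))"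
    by (intro bounded_linear_compose[OF bounded_linear_Re] bounded_linear_compose[OF bounded_linear_Im]
        bounded_linear_mult_right)+
  ultimately show ?thesis
    by (simp add: bounded_linear_add bounded_linear_compose[OF bounded_linear_scaleR_left])
qed

lemma norm_slice_embed:
  assumes "I \<in> imag_units" shows "norm (slice_embed I \<zeta> z) = cmod z"
proof -
  have "norm (slice_embed I \<zeta> z) = cmod (Complex (Re (cis \<zeta> * z)) (Im (cis \<zeta> * z)))"
    unfolding slice_embed_def by (rule norm_slice_point[OF assms])
  also have "\<dots> = cmod (cis \<zeta> * z)" by (simp only: complex_surj)
  finally show ?thesis by (simp add: norm_mult)
qed

lemma inj_slice_embed:
  assumes "I \<in> imag_units" shows "inj (slice_embed I \<zeta>)"
proof (rule injI)
  fix z w assume "slice_embed I \<zeta> z = slice_embed I \<zeta> w"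
  then have "slice_embed I \<zeta> (z - w) = 0"
    using linear_diff[OF bounded_linear.linear[OF bounded_linear_slice_embed]] by (metis right_minus_eq)
  then show "z = w" using norm_slice_embed[OF assms, of \<zeta> "z - w"] by simp
qed

lemma slice_embed_in_plane: "slice_embed I \<zeta> z \<in> slice_plane I"
  unfolding slice_embed_def slice_plane_def by blast

lemma sector_eq_image_csector: "sector I \<zeta> \<phi> = slice_embed I \<zeta> ` csector \<phi>"
proof -
  have rcis: "slice_embed I \<zeta> (rcis r \<theta>) = r *\<^sub>R qexp_I I (\<zeta> + \<theta>)" for r \<theta>
  proof -
    have "cis \<zeta> * rcis r \<theta> = rcis r (\<zeta> + \<theta>)" by (simp add: rcis_def cis_mult mult.left_commute)
    then show ?thesis unfolding slice_embed_def qexp_I_def by (simp add: quat_eq_iff algebra_simps)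
  qed
  show ?thesis unfolding sector_def csector_def by (auto simp: rcis[symmetric])
qed

lemma bounded_linear_slice_coord: "bounded_linear (slice_coord I u)"
proof -
  have "linear (slice_coord I u)"
    by (rule linearI) (simp_all add: slice_coord_def inner_add_left complex_eq_iff)
  then show ?thesis by (simp add: linear_conv_bounded_linear)
qed

lemma norm_slice_coord_le:
  assumes "I \<in> imag_units" "norm u = 1"
  shows "cmod (slice_coord I u w) \<le> norm w"
proof -
  have "(inner w u)^2 + (inner w (qmult I u))^2 \<le> (norm w)^2"
    by (rule bessel_inequality_two) (use orthonormal_imag_pair[OF assms] assms in auto)
  then have "(cmod (slice_coord I u w))^2 \<le> (norm w)^2" by (simp add: slice_coord_def cmod_power2)
  then show ?thesis by (simp add: power2_le_iff_abs_le)
qed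

lemma slice_coord_self:
  assumes "I \<in> imag_units" "norm u = 1"
  shows "slice_coord I u (c *\<^sub>R u) = of_real c"
  using orthonormal_imag_pair[OF assms] assms(2) by (simp add: slice_coord_def complex_eq_iff norm_eq_1)

lemma slice_coord_qmult:
  assumes "I \<in> imag_units"
  shows "slice_coord I u (qmult I w) = \<i> * slice_coord I u w"
  using inner_qmult_imag_skew[OF assms, of w u] inner_qmult_imag_isometry[OF assms, of w u]
  by (simp add: slice_coord_def complex_eq_iff)

(* The slice Cauchy-Riemann equation makes the coordinate image of the real derivative
  complex linear. *)
lemma slice_coord_cauchy_riemann:
  assumes I: "I \<in> imag_units" and D: "bounded_linear D" and cr: "D (1, 0) + qmult I (D (0, 1)) = 0"
  shows "slice_coord I u (D (Re h, Im h)) = slice_coord I u (D (1, 0)) * h"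
proof -
  interpret D: bounded_linear D by (rule D)
  interpret T: bounded_linear "slice_coord I u" by (rule bounded_linear_slice_coord)
  define c where "c = slice_coord I u (D (1, 0))"
  have "D (1, 0) = - qmult I (D (0, 1))" using cr by (simp add: eq_neg_iff_add_eq_0)
  then have "c = - slice_coord I u (qmult I (D (0, 1)))" unfolding c_def by (simp add: T.neg)
  then have c01: "slice_coord I u (D (0, 1)) = \<i> * c"
    by (simp add: slice_coord_qmult[OF I] algebra_simps)
  have "(Re h, Im h) = Re h *\<^sub>R (1, 0) + Im h *\<^sub>R (0, 1)" by simp
  then have "slice_coord I u (D (Re h, Im h)) = Re h *\<^sub>R c + Im h *\<^sub>R (\<i> * c)"
    by (simp only: D.add D.scaleR T.add T.scaleR c_def c01)
  also have "\<dots> = c * h" by (simp add: scaleR_conv_of_real complex_eq_iff algebra_simps)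
  finally show ?thesis by (simp add: c_def)
qed

lemma slice_coord_field_differentiable:
  assumes I: "I \<in> imag_units" and sr: "slice_regular f \<Omega>" and z: "slice_embed I \<zeta> z \<in> \<Omega>"
  shows "(\<lambda>z. slice_coord I u (f (slice_embed I \<zeta> z))) field_differentiable (at z)"
proof -
  define F where "F = (\<lambda>(s, t). f (qreal s + t *\<^sub>R I))"
  define P where "P \<omega> = (Re \<omega>, Im \<omega>)" for \<omega> :: complex
  define w0 where "w0 = cis \<zeta> * z"
  have "qreal (Re w0) + Im w0 *\<^sub>R I \<in> \<Omega>" using z by (simp add: slice_embed_def w0_def)
  then obtain D where D: "(F has_derivative D) (at (P w0))" and cr: "D (1, 0) + qmult I (D (0, 1)) = 0"
    using sr I unfolding slice_regular_def F_def P_def by blast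
  have "bounded_linear P" unfolding P_def
    by (intro bounded_linear_Pair bounded_linear_Re bounded_linear_Im)
  then have "((slice_coord I u \<circ> F \<circ> P) has_derivative (slice_coord I u \<circ> D \<circ> P)) (at w0)"
    using D bounded_linear_slice_coord
    by (auto intro!: diff_chain_at bounded_linear_imp_has_derivative simp: o_assoc)
  moreover have "slice_coord I u \<circ> D \<circ> P = (\<lambda>h. slice_coord I u (D (1, 0)) * h)"
    using slice_coord_cauchy_riemann[OF I has_derivative_bounded_linear[OF D] cr]
    by (auto simp: P_def)
  ultimately have "((slice_coord I u \<circ> F \<circ> P) has_field_derivative slice_coord I u (D (1, 0))) (at w0)"
    by (simp add: has_field_derivative_def)
  then have "((slice_coord I u \<circ> F \<circ> P) \<circ> (\<lambda>z. cis \<zeta> * z) has_field_derivative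
      slice_coord I u (D (1, 0)) * cis \<zeta>) (at z)"
    unfolding w0_def by (intro DERIV_chain derivative_eq_intros) auto
  moreover have "(slice_coord I u \<circ> F \<circ> P) \<circ> (\<lambda>z. cis \<zeta> * z) = (\<lambda>z. slice_coord I u (f (slice_embed I \<zeta> z)))"
    by (auto simp: F_def P_def slice_embed_def)
  ultimately show ?thesis unfolding field_differentiable_def by auto
qed

lemma exists_slice_plane: "\<exists>I\<in>imag_units. q \<in> slice_plane I"
proof -
  define n where "n = sqrt ((q$2)^2 + (q$3)^2 + (q$4)^2)"
  show ?thesis
  proof (cases "n = 0")
    case True
    then have "q$2 = 0" "q$3 = 0" "q$4 = 0"
      by (simp_all add: n_def sum_power2_eq_zero_iff add_nonneg_eq_0_iff)
    then have "q = qreal (q$1) + 0 *\<^sub>R vector [0, 1, 0, 0]" by (simp add: quat_eq_iff)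
    moreover have "vector [0, 1, 0, 0] \<in> imag_units" by (simp add: imag_units_def vec4_comp)
    ultimately show ?thesis unfolding slice_plane_def by blast
  next
    case False
    moreover have "n \<ge> 0" by (simp add: n_def)
    ultimately have npos: "n > 0" by simp
    define I :: quat where "I = vector [0, q$2 / n, q$3 / n, q$4 / n]"
    have "(q$2 / n)^2 + (q$3 / n)^2 + (q$4 / n)^2 = ((q$2)^2 + (q$3)^2 + (q$4)^2) / n^2"
      by (simp add: power_divide add_divide_distrib)
    also have "\<dots> = 1" using npos by (simp add: n_def)
    finally have "I \<in> imag_units" by (simp add: I_def imag_units_def vec4_comp)
    moreover have "q = qreal (q$1) + n *\<^sub>R I" using npos by (simp add: quat_eq_iff I_def vec4_comp)
    ultimately show ?thesis unfolding slice_plane_def by blast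
  qed
qed

lemma norm_le_max_modulus:
  assumes cf: "continuous_on (closure \<Omega>) f" and p: "p \<in> closure \<Omega>"
  shows "norm (f p) \<le> max_modulus f \<Omega> (norm p)"
proof -
  define K where "K = closure \<Omega> \<inter> sphere 0 (norm p)"
  have "compact K" unfolding K_def by (intro closed_Int_compact closed_closure compact_sphere)
  moreover have "continuous_on K (\<lambda>q. norm (f q))"
    by (rule continuous_on_subset[OF continuous_on_norm[OF cf]]) (simp add: K_def)
  ultimately have "bdd_above ((\<lambda>q. norm (f q)) ` K)"
    by (intro bounded_imp_bdd_above compact_imp_bounded compact_continuous_image)
  moreover have "closure \<Omega> \<inter> {q. norm q = norm p} = K" by (auto simp: K_def)
  ultimately show ?thesis unfolding max_modulus_def using p by (auto simp: K_def intro: cSup_upper)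
qed

lemma le_exp_powr_of_lnp_lnp:
  assumes r: "1 < r" and \<rho>: "0 < \<rho>" and m: "lnp (lnp m) / ln r < \<rho>"
  shows "m \<le> exp (r powr \<rho>)"
proof (cases "m \<le> exp 1")
  case True
  have "1 \<le> r powr \<rho>" using r \<rho> by (intro ge_one_powr_ge_zero) auto
  then show ?thesis using True by (meson exp_le_cancel_iff order_trans)
next
  case False
  moreover have "(1::real) < exp 1" by simp
  ultimately have m1: "1 < m" by linarith
  then have lnm: "1 < ln m" using ln_less_cancel_iff[of "exp 1" m] False by simp
  then have "ln (ln m) < \<rho> * ln r" using m r m1 by (simp add: lnp_def divide_less_eq)
  then have "ln m < r powr \<rho>" using lnm r by (simp add: powr_def mult.commute ln_less_cancel_iff[symmetric])
  then show ?thesis using m1 by (simp add: ln_less_cancel_iff[symmetric] less_imp_le)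
qed

lemma max_modulus_growth_bound:
  assumes "order_of f \<Omega> < ereal \<rho>" "0 < \<rho>"
  shows "\<exists>R0. \<forall>r\<ge>R0. max_modulus f \<Omega> r \<le> exp (r powr \<rho>)"
proof -
  have "eventually (\<lambda>r. ereal (lnp (lnp (max_modulus f \<Omega> r)) / ln r) < ereal \<rho>) at_top"
    using Limsup_lessD assms(1) unfolding order_of_def by blast
  then have "eventually (\<lambda>r. max_modulus f \<Omega> r \<le> exp (r powr \<rho>)) at_top"
    using eventually_gt_at_top[of 1] by eventually_elim (use le_exp_powr_of_lnp_lnp assms(2) in auto)
  then show ?thesis by (simp add: eventually_at_top_linorder)
qed

lemma angle_le_opening:
  assumes "angle_opening \<Omega> = pi / \<alpha>" and "I \<in> imag_units"
    and "0 < \<phi>" "\<phi> < 2 * pi" and "\<Omega> \<inter> slice_plane I = sector I \<zeta> \<phi>"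
  shows "0 < \<alpha>" "\<alpha> * \<phi> \<le> pi"
proof -
  have "\<phi> \<le> angle_opening \<Omega>"
    unfolding angle_opening_def using assms(2-5)
    by (intro cSup_upper bdd_aboveI[of _ "2 * pi"]) auto
  then have le: "\<phi> \<le> pi / \<alpha>" using assms(1) by simp
  then show "0 < \<alpha>" using assms(3) by (metis divide_nonneg_nonpos not_le order.strict_trans2 pi_ge_zero)
  then show "\<alpha> * \<phi> \<le> pi" using le by (simp add: field_simps)
qed

lemma exponents_below_order:
  assumes ord: "order_of f \<Omega> < ereal \<alpha>" and \<alpha>: "0 < \<alpha>" "\<alpha> * \<phi> \<le> pi" and \<phi>: "0 < \<phi>"
  obtains \<rho> \<beta> R0 where "0 < \<beta>" "\<beta> * \<phi> < pi" "\<rho> < \<beta>"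
    and "\<And>r. R0 \<le> r \<Longrightarrow> max_modulus f \<Omega> r \<le> exp (r powr \<rho>)"
proof -
  obtain \<rho> where \<rho>: "max (order_of f \<Omega>) (ereal 0) < ereal \<rho>" "\<rho> < \<alpha>"
    using ereal_dense2[of "max (order_of f \<Omega>) (ereal 0)" "ereal \<alpha>"] ord \<alpha> by auto
  then obtain R0 where "\<And>r. R0 \<le> r \<Longrightarrow> max_modulus f \<Omega> r \<le> exp (r powr \<rho>)"
    using max_modulus_growth_bound[of f \<Omega> \<rho>] by auto
  moreover have "(\<rho> + \<alpha>) / 2 * \<phi> < \<alpha> * \<phi>" using \<rho> \<phi> by (simp add: mult_strict_right_mono)
  ultimately show ?thesis using that[of "(\<rho> + \<alpha>) / 2" \<rho> R0] \<rho> \<alpha> by auto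
qed

lemma slice_embed_closure_csector:
  assumes "\<Omega> \<inter> slice_plane I = sector I \<zeta> \<phi>"
  shows "slice_embed I \<zeta> ` closure (csector \<phi>) \<subseteq> closure \<Omega>"
proof (rule image_closure_subset)
  show "continuous_on (closure (csector \<phi>)) (slice_embed I \<zeta>)"
    by (rule linear_continuous_on[OF bounded_linear_slice_embed])
  show "slice_embed I \<zeta> ` csector \<phi> \<subseteq> closure \<Omega>"
    using assms closure_subset by (auto simp: sector_eq_image_csector)
qed simp

lemma slice_embed_frontier_csector:
  assumes I: "I \<in> imag_units" and "open \<Omega>" and sec: "\<Omega> \<inter> slice_plane I = sector I \<zeta> \<phi>"
    and "0 < \<phi>" "\<phi> < 2 * pi" and w: "w \<in> frontier (csector \<phi>)"
  shows "slice_embed I \<zeta> w \<in> frontier \<Omega>"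
proof -
  have "w \<in> closure (csector \<phi>)" "w \<notin> csector \<phi>"
    using w assms open_csector by (auto simp: frontier_def interior_open)
  moreover have "slice_embed I \<zeta> w \<notin> \<Omega>"
  proof
    assume "slice_embed I \<zeta> w \<in> \<Omega>"
    then have "slice_embed I \<zeta> w \<in> slice_embed I \<zeta> ` csector \<phi>"
      using sec slice_embed_in_plane[of I \<zeta> w] unfolding sector_eq_image_csector by blast
    then show False using \<open>w \<notin> csector \<phi>\<close> inj_image_mem_iff[OF inj_slice_embed[OF I]] by blast
  qed
  ultimately show ?thesis
    using slice_embed_closure_csector[OF sec] \<open>open \<Omega>\<close> by (auto simp: frontier_def interior_open)
qed

lemma slice_phragmen_lindelof:
  assumes I: "I \<in> imag_units" and "open \<Omega>" and sec: "\<Omega> \<inter> slice_plane I = sector I \<zeta> \<phi>"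
    and \<phi>: "0 < \<phi>" "\<phi> < 2 * pi" and \<beta>: "0 < \<beta>" "\<beta> * \<phi> < pi" "\<rho> < \<beta>"
    and sr: "slice_regular f \<Omega>" and cf: "continuous_on (closure \<Omega>) f"
    and M: "0 \<le> M" and fb: "\<forall>q\<in>frontier \<Omega>. norm (f q) \<le> M"
    and gr: "\<And>r. R0 \<le> r \<Longrightarrow> max_modulus f \<Omega> r \<le> exp (r powr \<rho>)"
    and u: "norm u = 1" and z: "z \<in> csector \<phi>"
  shows "norm (slice_coord I u (f (slice_embed I \<zeta> z))) \<le> M"
proof -
  define \<Phi> where "\<Phi> w = slice_coord I u (f (slice_embed I \<zeta> w))" for w
  have coord_le: "norm (\<Phi> w) \<le> norm (f (slice_embed I \<zeta> w))" for w
    unfolding \<Phi>_def by (rule norm_slice_coord_le[OF I u])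
  have cl: "slice_embed I \<zeta> w \<in> closure \<Omega>" if "w \<in> closure (csector \<phi>)" for w
    using slice_embed_closure_csector[OF sec] that by blast
  have "\<Phi> holomorphic_on csector \<phi>"
    unfolding \<Phi>_def holomorphic_on_def using sec
    by (auto intro!: field_differentiable_at_within slice_coord_field_differentiable[OF I sr]
        simp: sector_eq_image_csector)
  moreover have "continuous_on (closure (csector \<phi>)) \<Phi>"
    unfolding \<Phi>_def using cl
    by (intro continuous_on_compose2[OF linear_continuous_on[OF bounded_linear_slice_coord]]
        continuous_on_compose2[OF cf linear_continuous_on[OF bounded_linear_slice_embed]]) auto
  moreover have "norm (\<Phi> w) \<le> M" if "w \<in> frontier (csector \<phi>)" for w
    using fb slice_embed_frontier_csector[OF I \<open>open \<Omega>\<close> sec \<phi> that] coord_le order_trans by blast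
  moreover have "norm (\<Phi> w) \<le> exp (norm w powr \<rho>)"
    if "w \<in> closure (csector \<phi>)" "R0 \<le> norm w" for w
    using coord_le[of w] norm_le_max_modulus[OF cf cl[OF that(1)]] gr[OF that(2)]
    by (simp add: norm_slice_embed[OF I])
  ultimately show ?thesis
    unfolding \<Phi>_def[symmetric] using phragmen_lindelof_sector[OF \<phi> \<beta>] M z by blast
qed

theorem theorem4p4:
  fixes \<Omega> :: "quat set" and f :: "quat \<Rightarrow> quat" and \<alpha> M :: real
  assumes "angular_domain \<Omega>"
    and "angle_opening \<Omega> = pi / \<alpha>"
    and "slice_regular f \<Omega>"
    and "continuous_on (closure \<Omega>) f"
    and "order_of f \<Omega> < ereal \<alpha>"
    and "M \<ge> 0"
    and "\<forall>q\<in>frontier \<Omega>. norm (f q) \<le> M"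
  shows "\<forall>q\<in>\<Omega>. norm (f q) \<le> M"
proof
  fix q assume q: "q \<in> \<Omega>"
  have open_\<Omega>: "open \<Omega>" using assms(1) by (simp add: angular_domain_def slice_domain_def)
  obtain I where I: "I \<in> imag_units" "q \<in> slice_plane I" using exists_slice_plane by blast
  obtain \<zeta> \<phi> where \<phi>: "0 < \<phi>" "\<phi> < 2 * pi" and sec: "\<Omega> \<inter> slice_plane I = sector I \<zeta> \<phi>"
    using assms(1) I(1) unfolding angular_domain_def by blast
  obtain z where z: "z \<in> csector \<phi>" "q = slice_embed I \<zeta> z"
    using sec q I(2) by (auto simp: sector_eq_image_csector)
  have \<alpha>: "0 < \<alpha>" "\<alpha> * \<phi> \<le> pi" using angle_le_opening[OF assms(2) I(1) \<phi> sec] by auto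
  obtain \<rho> \<beta> R0 where \<beta>: "0 < \<beta>" "\<beta> * \<phi> < pi" "\<rho> < \<beta>"
    and gr: "\<And>r. R0 \<le> r \<Longrightarrow> max_modulus f \<Omega> r \<le> exp (r powr \<rho>)"
    using exponents_below_order[OF assms(5) \<alpha> \<phi>(1)] by blast
  show "norm (f q) \<le> M"
  proof (cases "f q = 0")
    case False
    define u where "u = (1 / norm (f q)) *\<^sub>R f q"
    have u: "norm u = 1" and "f q = norm (f q) *\<^sub>R u" using False by (simp_all add: u_def)
    then have "slice_coord I u (f q) = of_real (norm (f q))" using slice_coord_self[OF I(1) u] by metis
    then show ?thesis
      using slice_phragmen_lindelof[OF I(1) open_\<Omega> sec \<phi> \<beta> assms(3,4,6,7) gr u z(1)] z(2) by simp
  qed (use assms(6) in simp)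
qed

end
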